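(* For every $d\ge1$, $$I_d\le\left\lfloor\left(\frac4\pi\right)^{d/2}\Gamma\!\left(\frac d2+1\right)\right\rfloor.$$
   Context: A lattice is well-rounded if its minimal vectors (nonzero vectors of minimal length) span $\Lambda\otimes\mathbb R$. $I_d$ is the smallest integer such that whenever $\Lambda$ is a $d$-dimensional Euclidean lattice and $\Lambda'\subseteq\Lambda$ is a $d$-dimensional well-rounded sublattice whose minimal vectors are all minimal vectors of $\Lambda$, the index $[\Lambda:\Lambda']$ is at most $I_d$. *)

theory Defs
  imports "HOL-Analysis.Analysis"
begin

definition is_lattice :: "'a::euclidean_space set \<Rightarrow> bool" where
  "is_lattice L \<longleftrightarrow> (\<exists>B. independent B \<and> span B = UNIV \<and>
      L = {(\<Sum>b\<in>B. of_int (c b) *\<^sub>R b) | c. True})"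

definition min_vecs :: "'a::euclidean_space set \<Rightarrow> 'a set" where
  "min_vecs L = {v \<in> L. v \<noteq> 0 \<and> (\<forall>w\<in>L. w \<noteq> 0 \<longrightarrow> norm v \<le> norm w)}"

text \<open>Well-rounded: minimal vectors span L \<otimes> R (= the whole space for a full-rank lattice).\<close>
definition well_rounded :: "'a::euclidean_space set \<Rightarrow> bool" where
  "well_rounded L \<longleftrightarrow> span (min_vecs L) = UNIV"

definition lattice_index :: "'a::euclidean_space set \<Rightarrow> 'a set \<Rightarrow> nat" where
  "lattice_index L L' = card ((\<lambda>x. (\<lambda>y. x + y) ` L') ` L)"

definition I_bound :: "'a::euclidean_space itself \<Rightarrow> enat" where
  "I_bound _ = Sup {enat (lattice_index L L') | (L::'a set) L'.
      is_lattice L \<and> is_lattice L' \<and> L' \<subseteq> L \<and> well_rounded L' \<and> min_vecs L' \<subseteq> min_vecs L}"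

end

theory Submission
  imports Defs
begin

text \<open>
  Let \<open>v\<^sub>1, \<dots>, v\<^sub>d\<close> be linearly independent minimal vectors of \<open>L'\<close>; they all have length
  \<open>m = \<lambda>\<^sub>1(L)\<close>. Let \<open>R \<subseteq> L\<close> be finite with pairwise differences outside \<open>L'\<close>, and \<open>K \<ge> 1\<close>.
  The \<open>|R| K\<^sup>d\<close> vectors \<open>x + \<Sum> k\<^sub>i v\<^sub>i\<close> (\<open>x \<in> R\<close>, \<open>0 \<le> k\<^sub>i < K\<close>) are pairwise incongruent
  modulo \<open>K\<langle>v\<rangle>\<close>, so shifting each into the half-open box \<open>0 \<le> y \<bullet> u\<^sub>l < K (v\<^sub>l \<bullet> u\<^sub>l)\<close>, where
  \<open>u\<close> is the Gram--Schmidt frame of \<open>v\<close>, yields \<open>|R| K\<^sup>d\<close> distinct points of \<open>L\<close>. They are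
  \<open>m\<close>-separated and the box has sides at most \<open>K m\<close> (Hadamard), so disjoint balls of radius
  \<open>m/2\<close> give \<open>|R| K\<^sup>d \<omega>\<^sub>d (m/2)\<^sup>d \<le> ((K + 1) m)\<^sup>d\<close>. Letting \<open>K \<rightarrow> \<infinity>\<close>,
  \<open>[L : L'] \<le> 2\<^sup>d / \<omega>\<^sub>d = (4/\<pi>)\<^bsup>d/2\<^esup> \<Gamma>(d/2 + 1)\<close>.
\<close>

lemma is_latticeE:
  assumes "is_lattice L"
  obtains B where "L = {(\<Sum>b\<in>B. of_int (c b) *\<^sub>R b) | c. True}"
  using assms unfolding is_lattice_def by blast

lemma lattice_zero:
  assumes "is_lattice L"
  shows "0 \<in> L"
proof -
  obtain B where L: "L = {(\<Sum>b\<in>B. of_int (c b) *\<^sub>R b) | c. True}"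
    using assms by (rule is_latticeE)
  show ?thesis unfolding L by (auto intro!: exI[of _ "\<lambda>_. 0"])
qed

lemma lattice_add:
  assumes "is_lattice L" "x \<in> L" "y \<in> L"
  shows "x + y \<in> L"
proof -
  obtain B where L: "L = {(\<Sum>b\<in>B. of_int (c b) *\<^sub>R b) | c. True}"
    using assms(1) by (rule is_latticeE)
  obtain c c' where "x = (\<Sum>b\<in>B. of_int (c b) *\<^sub>R b)" "y = (\<Sum>b\<in>B. of_int (c' b) *\<^sub>R b)"
    using assms(2,3) unfolding L by blast
  then show ?thesis unfolding L
    by (auto intro!: exI[of _ "\<lambda>b. c b + c' b"] simp: scaleR_add_left sum.distrib)
qed

lemma lattice_scaleR_int:
  assumes "is_lattice L" "x \<in> L"
  shows "of_int z *\<^sub>R x \<in> L"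
proof -
  obtain B where L: "L = {(\<Sum>b\<in>B. of_int (c b) *\<^sub>R b) | c. True}"
    using assms(1) by (rule is_latticeE)
  obtain c where "x = (\<Sum>b\<in>B. of_int (c b) *\<^sub>R b)"
    using assms(2) unfolding L by blast
  then show ?thesis unfolding L
    by (auto intro!: exI[of _ "\<lambda>b. z * c b"] simp: scaleR_sum_right)
qed

lemma lattice_diff:
  assumes "is_lattice L" "x \<in> L" "y \<in> L"
  shows "x - y \<in> L"
  using lattice_add[OF assms(1,2) lattice_scaleR_int[OF assms(1,3), of "-1"]] by simp

lemma lattice_sum:
  assumes "is_lattice L" "\<And>i. i \<in> I \<Longrightarrow> f i \<in> L"
  shows "sum f I \<in> L"
  using assms(2)
  by (induction I rule: infinite_finite_induct) (auto intro: lattice_zero lattice_add assms(1))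

lemma lattice_coset_eq:
  assumes "is_lattice L" "x - y \<in> L"
  shows "(+) x ` L = (+) y ` L"
proof -
  have "(+) x ` L \<subseteq> (+) y ` L" if "x - y \<in> L" for x y
  proof
    fix w assume "w \<in> (+) x ` L"
    then obtain l where "l \<in> L" "w = x + l" by blast
    moreover have "(x - y) + l \<in> L" using lattice_add[OF assms(1) that \<open>l \<in> L\<close>] .
    moreover have "w = y + ((x - y) + l)" using \<open>w = x + l\<close> by simp
    ultimately show "w \<in> (+) y ` L" by blast
  qed
  moreover have "y - x \<in> L" using lattice_scaleR_int[OF assms, of "-1"] by simp
  ultimately show ?thesis using assms(2) by blast
qed

text \<open>If there are infinitely many cosets, \<open>lattice_index\<close> is the junk value 0.\<close>
lemma lattice_index_le:
  assumes L': "is_lattice L'" and "C \<ge> 0"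
    and bound: "\<And>R. finite R \<Longrightarrow> R \<subseteq> L \<Longrightarrow>
        (\<And>x y. x \<in> R \<Longrightarrow> y \<in> R \<Longrightarrow> x - y \<in> L' \<Longrightarrow> x = y) \<Longrightarrow> real (card R) \<le> C"
  shows "real (lattice_index L L') \<le> C"
proof (cases "finite ((\<lambda>x. (+) x ` L') ` L)")
  case False
  then show ?thesis using \<open>C \<ge> 0\<close> by (simp add: lattice_index_def)
next
  case True
  define S where "S = (\<lambda>x. (+) x ` L') ` L"
  define rep where "rep c = (SOME x. x \<in> L \<and> c = (+) x ` L')" for c
  have rep: "rep c \<in> L \<and> c = (+) (rep c) ` L'" if "c \<in> S" for c
    unfolding rep_def by (rule someI_ex) (use that in \<open>auto simp: S_def\<close>)
  have "inj_on rep S" by (rule inj_onI) (metis rep)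
  then have "card (rep ` S) = lattice_index L L'"
    by (simp add: card_image lattice_index_def S_def)
  moreover have "real (card (rep ` S)) \<le> C"
  proof (rule bound)
    show "finite (rep ` S)" using True by (simp add: S_def)
    show "rep ` S \<subseteq> L" using rep by blast
    fix x y assume "x \<in> rep ` S" "y \<in> rep ` S" "x - y \<in> L'"
    then obtain c c' where "c \<in> S" "c' \<in> S" "x = rep c" "y = rep c'" by blast
    with rep have "c = c'" using lattice_coset_eq[OF L' \<open>x - y \<in> L'\<close>] by metis
    with \<open>x = rep c\<close> \<open>y = rep c'\<close> show "x = y" by simp
  qed
  ultimately show ?thesis by simp
qed

lemma triangular_orthonormal_frame:
  fixes v :: "nat \<Rightarrow> 'a::euclidean_space"
  assumes indep: "independent (v ` {..<d})" and inj: "inj_on v {..<d}"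
  obtains u where "\<And>i j. i < d \<Longrightarrow> j < d \<Longrightarrow> u i \<bullet> u j = (if i = j then 1 else 0)"
    and "\<And>i j. i < j \<Longrightarrow> j < d \<Longrightarrow> v i \<bullet> u j = 0"
    and "\<And>i. i < d \<Longrightarrow> 0 < v i \<bullet> u i"
proof -
  have "\<forall>i. \<exists>y z. y \<in> span (v ` {..<i}) \<and> (\<forall>w\<in>span (v ` {..<i}). orthogonal z w) \<and> v i = y + z"
    by (metis orthogonal_subspace_decomp_exists)
  then obtain Y Z where Y: "\<And>i. Y i \<in> span (v ` {..<i})"
    and Z: "\<And>i w. w \<in> span (v ` {..<i}) \<Longrightarrow> orthogonal (Z i) w"
    and YZ: "\<And>i. v i = Y i + Z i" by metis
  have v_span: "v i \<in> span (v ` {..<j})" if "i < j" for i j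
    using that by (intro span_base) auto
  have Z_nonzero: "Z i \<noteq> 0" if "i < d" for i
  proof
    assume "Z i = 0"
    then have "v i \<in> span (v ` {..<i})" using Y YZ by simp
    moreover have "independent (insert (v i) (v ` {..<i}))"
      by (rule independent_mono[OF indep]) (use that in auto)
    moreover have "v i \<notin> v ` {..<i}"
      using inj that by (auto simp: inj_on_def dest: less_trans)
    ultimately show False by (simp add: independent_insert)
  qed
  have v_Z: "v i \<bullet> Z j = 0" if "i < j" for i j
    using Z[OF v_span[OF that]] by (simp add: orthogonal_def inner_commute)
  have Z_Z: "Z i \<bullet> Z j = 0" if "i < j" for i j
  proof -
    have "span (v ` {..<i}) \<subseteq> span (v ` {..<j})" using that by (intro span_mono) auto
    then have "Z i \<in> span (v ` {..<j})"
      using YZ[of i] Y[of i] v_span[OF that] by (metis add_diff_cancel_left' span_diff subsetD)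
    then show ?thesis using Z[of "Z i" j] by (simp add: orthogonal_def inner_commute)
  qed
  have v_Z_self: "v i \<bullet> Z i = Z i \<bullet> Z i" for i
  proof -
    have "Y i \<bullet> Z i = 0" using Z[OF Y[of i]] by (simp add: orthogonal_def inner_commute)
    then show ?thesis by (simp add: YZ[of i] inner_add_left)
  qed
  define u where "u i = Z i /\<^sub>R norm (Z i)" for i
  show ?thesis
  proof (rule that[of u])
    fix i j assume "i < d" "j < d"
    then show "u i \<bullet> u j = (if i = j then 1 else 0)"
      using Z_nonzero Z_Z[of i j] Z_Z[of j i] unfolding u_def
      by (cases i j rule: linorder_cases) (auto simp: inner_commute dot_square_norm power2_eq_square)
  next
    fix i j assume "i < j" "j < d"
    then show "v i \<bullet> u j = 0" using v_Z by (simp add: u_def)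
  next
    fix i assume "i < d"
    then show "0 < v i \<bullet> u i"
      using Z_nonzero by (simp add: u_def v_Z_self dot_square_norm power2_eq_square)
  qed
qed

lemma inner_sum_orthonormal_left:
  fixes u :: "nat \<Rightarrow> 'a::real_inner"
  assumes "\<And>i j. i < d \<Longrightarrow> j < d \<Longrightarrow> u i \<bullet> u j = (if i = j then 1 else 0)" "l < d"
  shows "(\<Sum>j<d. c j *\<^sub>R u j) \<bullet> u l = c l"
proof -
  have "(\<Sum>j<d. c j *\<^sub>R u j) \<bullet> u l = (\<Sum>j<d. if j = l then c j else 0)"
    unfolding inner_sum_left using assms by (intro sum.cong) auto
  then show ?thesis using assms(2) by simp
qed

lemma orthonormal_frame_isometry:
  fixes u :: "nat \<Rightarrow> 'a::euclidean_space"
  assumes orth: "\<And>i j. i < DIM('a) \<Longrightarrow> j < DIM('a) \<Longrightarrow> u i \<bullet> u j = (if i = j then 1 else 0)"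
  obtains g :: "'a \<Rightarrow> 'a" and e where "bij_betw e {..<DIM('a)} Basis"
    and "\<And>x l. l < DIM('a) \<Longrightarrow> g x \<bullet> e l = x \<bullet> u l"
    and "\<And>x y. dist (g x) (g y) = dist x y"
proof -
  let ?d = "DIM('a)"
  obtain e where e: "bij_betw e {..<?d} (Basis :: 'a set)"
    using ex_bij_betw_nat_finite[of "Basis :: 'a set"] by (auto simp: atLeast0LessThan)
  have e_orth: "e i \<bullet> e j = (if i = j then 1 else 0)" if "i < ?d" "j < ?d" for i j
  proof -
    have "e i \<in> Basis" "e j \<in> Basis" "e i = e j \<longleftrightarrow> i = j"
      using e that by (auto simp: bij_betw_def inj_on_def)
    then show ?thesis by (simp add: inner_Basis)
  qed
  define g where "g x = (\<Sum>j<?d. (x \<bullet> u j) *\<^sub>R e j)" for x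
  have g_coord: "g x \<bullet> e l = x \<bullet> u l" if "l < ?d" for x l
    unfolding g_def using inner_sum_orthonormal_left[OF e_orth that] .
  have "pairwise orthogonal (u ` {..<?d})" "0 \<notin> u ` {..<?d}"
    using orth by (auto simp: pairwise_def orthogonal_def) (metis zero_neq_one inner_zero_left)
  then have "independent (u ` {..<?d})" by (rule pairwise_orthogonal_independent)
  moreover have "card (u ` {..<?d}) = ?d"
    using orth by (subst card_image) (auto simp: inj_on_def, metis one_neq_zero)
  ultimately have "UNIV \<subseteq> span (u ` {..<?d})"
    by (metis card_ge_dim_independent dim_UNIV order_refl subset_UNIV)
  then have span_u: "span (u ` {..<?d}) = UNIV" by blast
  have inner_self_expansion: "w \<bullet> w = (\<Sum>j<?d. (z \<bullet> u j) * (z \<bullet> u j))"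
    if "w = (\<Sum>j<?d. (z \<bullet> u j) *\<^sub>R f j)" "\<And>j. j < ?d \<Longrightarrow> w \<bullet> f j = z \<bullet> u j" for w z f
  proof -
    have "w \<bullet> w = (\<Sum>j<?d. (z \<bullet> u j) * (f j \<bullet> w))"
      by (subst (1) that(1)) (simp add: inner_sum_left)
    also have "\<dots> = (\<Sum>j<?d. (z \<bullet> u j) * (z \<bullet> u j))"
      using that(2) by (intro sum.cong refl) (metis inner_commute lessThan_iff)
    finally show ?thesis .
  qed
  have "z = (\<Sum>j<?d. (z \<bullet> u j) *\<^sub>R u j)" for z
  proof (rule vector_eq_dot_span[of _ "u ` {..<?d}"])
    fix i assume "i \<in> u ` {..<?d}"
    then obtain l where "l < ?d" "i = u l" by blast
    then show "i \<bullet> z = i \<bullet> (\<Sum>j<?d. (z \<bullet> u j) *\<^sub>R u j)"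
      using inner_sum_orthonormal_left[OF orth] by (simp add: inner_commute)
  qed (simp_all add: span_u)
  then have norm_g: "norm (g z) = norm z" for z
    using inner_self_expansion[OF g_def g_coord] inner_self_expansion[of z z u]
    by (simp add: norm_eq_sqrt_inner)
  have "g x - g y = g (x - y)" for x y
    by (simp add: g_def inner_diff_left scaleR_diff_left sum_subtractf)
  then have "dist (g x) (g y) = dist x y" for x y by (simp add: dist_norm norm_g)
  then show ?thesis using that[of e g] e g_coord by blast
qed

lemma card_separated_in_box_le:
  fixes P :: "'a::euclidean_space set"
  assumes P: "finite P" and r: "r > 0"
    and sep: "\<And>p q. p \<in> P \<Longrightarrow> q \<in> P \<Longrightarrow> p \<noteq> q \<Longrightarrow> 2 * r \<le> dist p q"
    and box: "\<And>p b. p \<in> P \<Longrightarrow> b \<in> Basis \<Longrightarrow> 0 \<le> p \<bullet> b \<and> p \<bullet> b \<le> A b"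
    and A: "\<And>b. b \<in> Basis \<Longrightarrow> 0 \<le> A b"
  shows "real (card P) * (unit_ball_vol DIM('a) * r ^ DIM('a)) \<le> (\<Prod>b\<in>Basis. A b + 2 * r)"
proof -
  define lo :: 'a where "lo = - (\<Sum>b\<in>Basis. r *\<^sub>R b)"
  define hi :: 'a where "hi = (\<Sum>b\<in>Basis. (A b + r) *\<^sub>R b)"
  have lo: "lo \<bullet> b = - r" and hi: "hi \<bullet> b = A b + r" if "b \<in> Basis" for b
    using that by (simp_all add: lo_def hi_def)
  have ball_in_box: "ball p r \<subseteq> cbox lo hi" if "p \<in> P" for p
  proof
    fix z assume z: "z \<in> ball p r"
    show "z \<in> cbox lo hi" unfolding mem_box
    proof
      fix b :: 'a assume b: "b \<in> Basis"
      have "\<bar>(z - p) \<bullet> b\<bar> < r"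
        using Basis_le_norm[OF b, of "z - p"] z by (simp add: dist_norm norm_minus_commute)
      then show "lo \<bullet> b \<le> z \<bullet> b \<and> z \<bullet> b \<le> hi \<bullet> b"
        using box[OF that b] lo[OF b] hi[OF b] by (auto simp: inner_diff_left)
    qed
  qed
  have "disjoint_family_on (\<lambda>p. ball p r) P"
    unfolding disjoint_family_on_def
  proof (intro ballI impI, rule ccontr)
    fix p q assume "p \<in> P" "q \<in> P" "p \<noteq> q" "ball p r \<inter> ball q r \<noteq> {}"
    then obtain z where "dist p z < r" "dist q z < r" by auto
    then have "dist p q < 2 * r" by (metis dist_triangle_less_add dist_commute mult_2)
    with sep[OF \<open>p \<in> P\<close> \<open>q \<in> P\<close> \<open>p \<noteq> q\<close>] show False by simp
  qed
  then have "measure lborel (\<Union>p\<in>P. ball p r) = (\<Sum>p\<in>P. measure lborel (ball p r))"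
    by (intro measure_finite_Union[OF P]) (use r in \<open>auto simp: emeasure_ball less_imp_le\<close>)
  also have "\<dots> = real (card P) * (unit_ball_vol DIM('a) * r ^ DIM('a))"
    using r by (simp add: content_ball)
  finally have "real (card P) * (unit_ball_vol DIM('a) * r ^ DIM('a)) = measure lborel (\<Union>p\<in>P. ball p r)" ..
  also have "\<dots> \<le> measure lborel (cbox lo hi)"
    by (rule measure_mono_fmeasurable) (use ball_in_box in \<open>auto intro!: borel_open\<close>)
  also have "\<dots> = (\<Prod>b\<in>Basis. A b + 2 * r)"
    using A r by (simp add: measure_lborel_cbox_eq lo hi inner_diff_left add.commute cong: prod.cong)
  finally show ?thesis .
qed

lemma card_separated_in_frame_box_le:
  fixes u :: "nat \<Rightarrow> 'a::euclidean_space" and P :: "'a set"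
  assumes orth: "\<And>i j. i < DIM('a) \<Longrightarrow> j < DIM('a) \<Longrightarrow> u i \<bullet> u j = (if i = j then 1 else 0)"
    and P: "finite P" and r: "r > 0"
    and sep: "\<And>p q. p \<in> P \<Longrightarrow> q \<in> P \<Longrightarrow> p \<noteq> q \<Longrightarrow> 2 * r \<le> dist p q"
    and box: "\<And>p l. p \<in> P \<Longrightarrow> l < DIM('a) \<Longrightarrow> 0 \<le> p \<bullet> u l \<and> p \<bullet> u l \<le> A l"
    and A: "\<And>l. l < DIM('a) \<Longrightarrow> 0 \<le> A l"
  shows "real (card P) * (unit_ball_vol DIM('a) * r ^ DIM('a)) \<le> (\<Prod>l<DIM('a). A l + 2 * r)"
proof -
  obtain g :: "'a \<Rightarrow> 'a" and e where e: "bij_betw e {..<DIM('a)} Basis"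
    and coord: "\<And>x l. l < DIM('a) \<Longrightarrow> g x \<bullet> e l = x \<bullet> u l"
    and isometric: "\<And>x y. dist (g x) (g y) = dist x y"
    using orthonormal_frame_isometry[OF orth] by metis
  have Basis_e: "\<exists>l<DIM('a). b = e l" if "b \<in> Basis" for b
    using e that by (auto simp: bij_betw_def)
  define A' where "A' b = A (inv_into {..<DIM('a)} e b)" for b
  have A'_e: "A' (e l) = A l" if "l < DIM('a)" for l
    using e that by (simp add: A'_def bij_betw_inv_into_left)
  have "inj_on g P" by (rule inj_onI) (metis isometric dist_eq_0_iff)
  then have "card (g ` P) = card P" by (rule card_image)
  moreover have "real (card (g ` P)) * (unit_ball_vol DIM('a) * r ^ DIM('a)) \<le> (\<Prod>b\<in>Basis. A' b + 2 * r)"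
  proof (rule card_separated_in_box_le)
    show "finite (g ` P)" using P by simp
    show "2 * r \<le> dist p q" if pq: "p \<in> g ` P" "q \<in> g ` P" "p \<noteq> q" for p q
    proof -
      obtain p' q' where "p' \<in> P" "q' \<in> P" "p = g p'" "q = g q'" using pq by blast
      with sep[of p' q'] \<open>p \<noteq> q\<close> show ?thesis by (auto simp: isometric)
    qed
    show "0 \<le> p \<bullet> b \<and> p \<bullet> b \<le> A' b" if pb: "p \<in> g ` P" "b \<in> Basis" for p b
    proof -
      obtain p' l where "p' \<in> P" "p = g p'" "l < DIM('a)" "b = e l"
        using pb Basis_e by blast
      then show ?thesis using box[of p' l] by (simp add: coord A'_e)
    qed
    show "0 \<le> A' b" if "b \<in> Basis" for b
      using Basis_e[OF that] A A'_e by force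
  qed (rule r)
  moreover have "(\<Prod>b\<in>Basis. A' b + 2 * r) = (\<Prod>l<DIM('a). A l + 2 * r)"
    using prod.reindex_bij_betw[OF e, of "\<lambda>b. A' b + 2 * r"] A'_e by simp
  ultimately show ?thesis by simp
qed

lemma exists_int_translate_into_frame_box:
  fixes v u :: "nat \<Rightarrow> 'a::real_inner"
  assumes tri: "\<And>i j. i < j \<Longrightarrow> j < d \<Longrightarrow> v i \<bullet> u j = 0"
    and pos: "\<And>i. i < d \<Longrightarrow> 0 < v i \<bullet> u i"
  shows "\<exists>z::nat \<Rightarrow> int. \<forall>l<d. 0 \<le> (y + (\<Sum>i<d. of_int (z i) *\<^sub>R v i)) \<bullet> u l
                         \<and> (y + (\<Sum>i<d. of_int (z i) *\<^sub>R v i)) \<bullet> u l < v l \<bullet> u l"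
proof -
  let ?S = "\<lambda>z::nat \<Rightarrow> int. y + (\<Sum>i<d. of_int (z i) *\<^sub>R v i)"
  let ?good = "\<lambda>j. \<exists>z. \<forall>l. j \<le> l \<longrightarrow> l < d \<longrightarrow> 0 \<le> ?S z \<bullet> u l \<and> ?S z \<bullet> u l < v l \<bullet> u l"
  have "?good j" if "j \<le> d" for j
    using that
  proof (induction rule: inc_induct)
    case base
    show ?case by simp
  next
    case (step j)
    then obtain z where z: "\<forall>l. Suc j \<le> l \<longrightarrow> l < d \<longrightarrow> 0 \<le> ?S z \<bullet> u l \<and> ?S z \<bullet> u l < v l \<bullet> u l"
      by blast
    define q where "q = \<lfloor>(?S z \<bullet> u j) / (v j \<bullet> u j)\<rfloor>"
    define z' where "z' = z(j := z j - q)"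
    have "(\<Sum>i<d. of_int (z' i) *\<^sub>R v i)
        = (\<Sum>i<d. of_int (z i) *\<^sub>R v i - (if i = j then of_int q *\<^sub>R v j else 0))"
      by (intro sum.cong) (auto simp: z'_def algebra_simps)
    then have S_z': "?S z' = ?S z - of_int q *\<^sub>R v j"
      using \<open>j < d\<close> by (simp add: sum_subtractf)
    have "0 \<le> ?S z' \<bullet> u j \<and> ?S z' \<bullet> u j < v j \<bullet> u j"
    proof -
      have a: "v j \<bullet> u j > 0" using pos \<open>j < d\<close> .
      have "of_int q * (v j \<bullet> u j) \<le> ?S z \<bullet> u j" "?S z \<bullet> u j < (of_int q + 1) * (v j \<bullet> u j)"
        using a unfolding q_def
        by (simp_all add: le_divide_eq divide_less_eq floor_divide_lower floor_divide_upper)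
      then show ?thesis by (simp add: S_z' inner_diff_left algebra_simps)
    qed
    moreover have "?S z' \<bullet> u l = ?S z \<bullet> u l" if "j < l" "l < d" for l
      using tri[OF that] by (simp add: S_z' inner_diff_left)
    ultimately show ?case using z by (metis Suc_leI le_neq_implies_less)
  qed
  from this[of 0] show ?thesis by simp
qed

lemma independent_family_coeff_eq_0:
  fixes v :: "nat \<Rightarrow> 'a::real_vector"
  assumes indep: "independent (v ` {..<d})" and inj: "inj_on v {..<d}"
    and sum: "(\<Sum>i<d. c i *\<^sub>R v i) = 0" and "i < d"
  shows "c i = 0"
proof -
  define idx where "idx = inv_into {..<d} v"
  have "(\<Sum>x\<in>v ` {..<d}. c (idx x) *\<^sub>R x) = (\<Sum>i<d. c i *\<^sub>R v i)"
    by (simp add: sum.reindex[OF inj] idx_def inv_into_f_f[OF inj])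
  then have "\<forall>x\<in>v ` {..<d}. c (idx x) = 0"
    using indep sum by (auto simp: dependent_finite)
  then show ?thesis using \<open>i < d\<close> by (auto simp: idx_def inv_into_f_f[OF inj])
qed

lemma eq_if_add_mult_eq_add_mult:
  fixes a b K :: nat and z z' :: int
  assumes "a < K" "b < K" "int a + int K * z = int b + int K * z'"
  shows "a = b"
proof -
  have "int a = (int a + int K * z) mod int K" using \<open>a < K\<close> by simp
  also have "\<dots> = (int b + int K * z') mod int K" using assms(3) by simp
  also have "\<dots> = int b" using \<open>b < K\<close> by simp
  finally show ?thesis by simp
qed

lemma digit_combination_inj:
  fixes v :: "nat \<Rightarrow> 'a::euclidean_space"
  assumes L': "is_lattice L'" and v: "\<And>i. i < d \<Longrightarrow> v i \<in> L'"
    and indep: "independent (v ` {..<d})" and inj: "inj_on v {..<d}"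
    and Rsep: "\<And>x y. x \<in> R \<Longrightarrow> y \<in> R \<Longrightarrow> x - y \<in> L' \<Longrightarrow> x = y"
    and R: "x \<in> R" "x' \<in> R"
    and digits: "\<And>i. i < d \<Longrightarrow> k i < K \<and> k' i < K"
    and eq: "x + (\<Sum>i<d. of_int (int (k i) + int K * z i) *\<^sub>R v i)
           = x' + (\<Sum>i<d. of_int (int (k' i) + int K * z' i) *\<^sub>R v i)"
  shows "x = x' \<and> (\<forall>i<d. k i = k' i)"
proof -
  define c where "c i = int (k i) + int K * z i" for i
  define c' where "c' i = int (k' i) + int K * z' i" for i
  have "x - x' = (\<Sum>i<d. of_int (c' i - c i) *\<^sub>R v i)"
    using eq by (simp add: c_def c'_def algebra_simps sum_subtractf scaleR_diff_left)
  also have "\<dots> \<in> L'"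
    using v by (intro lattice_sum[OF L'] lattice_scaleR_int[OF L']) simp
  finally have "x = x'" using Rsep R by blast
  with eq have "(\<Sum>i<d. of_int (c i - c' i) *\<^sub>R v i) = 0"
    by (simp add: c_def c'_def sum_subtractf scaleR_diff_left)
  then have c_eq: "c i = c' i" if "i < d" for i
    using independent_family_coeff_eq_0[OF indep inj _ that, of "\<lambda>i. of_int (c i - c' i)"] by simp
  then have "k i = k' i" if "i < d" for i
    using eq_if_add_mult_eq_add_mult[of "k i" K "k' i"] digits[OF that] c_eq[OF that]
    by (simp add: c_def c'_def)
  with \<open>x = x'\<close> show ?thesis by blast
qed

lemma card_transversal_packing:
  fixes L L' R :: "'a::euclidean_space set" and v :: "nat \<Rightarrow> 'a" and K :: nat
  defines "d \<equiv> DIM('a)"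
  assumes L: "is_lattice L" and L': "is_lattice L'" and sub: "L' \<subseteq> L"
    and indep: "independent (v ` {..<d})" and inj: "inj_on v {..<d}"
    and v: "\<And>i. i < d \<Longrightarrow> v i \<in> L' \<and> norm (v i) \<le> m"
    and min: "\<And>w. w \<in> L \<Longrightarrow> w \<noteq> 0 \<Longrightarrow> m \<le> norm w"
    and R: "finite R" "R \<subseteq> L"
    and Rsep: "\<And>x y. x \<in> R \<Longrightarrow> y \<in> R \<Longrightarrow> x - y \<in> L' \<Longrightarrow> x = y"
    and K: "K \<ge> 1"
  shows "real (card R) * real K ^ d * (unit_ball_vol d * (m / 2) ^ d) \<le> ((real K + 1) * m) ^ d"
proof -
  have "0 < d" by (simp add: d_def)
  then have "v 0 \<noteq> 0"
    using indep dependent_zero[of "v ` {..<d}"] by (metis imageI lessThan_iff)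
  moreover have "v 0 \<in> L" "norm (v 0) \<le> m" using v[OF \<open>0 < d\<close>] sub by auto
  ultimately have m: "m > 0" using min by force
  obtain u where orth: "\<And>i j. i < d \<Longrightarrow> j < d \<Longrightarrow> u i \<bullet> u j = (if i = j then 1 else 0)"
    and tri: "\<And>i j. i < j \<Longrightarrow> j < d \<Longrightarrow> v i \<bullet> u j = 0"
    and diag: "\<And>i. i < d \<Longrightarrow> 0 < v i \<bullet> u i"
    using triangular_orthonormal_frame[OF indep inj] by blast
  define w where "w i = real K *\<^sub>R v i" for i
  have "\<forall>y. \<exists>z::nat \<Rightarrow> int. \<forall>l<d. 0 \<le> (y + (\<Sum>i<d. of_int (z i) *\<^sub>R w i)) \<bullet> u l
                         \<and> (y + (\<Sum>i<d. of_int (z i) *\<^sub>R w i)) \<bullet> u l < w l \<bullet> u l"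
    using K by (intro allI exists_int_translate_into_frame_box) (simp_all add: w_def tri diag)
  then obtain Z where Z: "\<And>y l. l < d \<Longrightarrow> 0 \<le> (y + (\<Sum>i<d. of_int (Z y i) *\<^sub>R w i)) \<bullet> u l
                         \<and> (y + (\<Sum>i<d. of_int (Z y i) *\<^sub>R w i)) \<bullet> u l < w l \<bullet> u l"
    by metis
  define start where "start x k = x + (\<Sum>i<d. of_nat (k i) *\<^sub>R v i)" for x k
  define pt where "pt = (\<lambda>(x, k). start x k + (\<Sum>i<d. of_int (Z (start x k) i) *\<^sub>R w i))"
  have pt_expand: "pt (x, k) = x + (\<Sum>i<d. of_int (int (k i) + int K * Z (start x k) i) *\<^sub>R v i)" for x k
    by (simp add: pt_def start_def w_def scaleR_add_left sum.distrib add.assoc algebra_simps)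
  define D where "D = R \<times> PiE {..<d} (\<lambda>_. {..<K})"
  have "inj_on pt D"
  proof (rule inj_onI, clarsimp simp: D_def)
    fix x k x' k' assume "x \<in> R" "x' \<in> R" "k \<in> PiE {..<d} (\<lambda>_. {..<K})" "k' \<in> PiE {..<d} (\<lambda>_. {..<K})"
      "pt (x, k) = pt (x', k')"
    then have "x = x' \<and> (\<forall>i<d. k i = k' i)"
      using v by (intro digit_combination_inj[OF L' _ indep inj Rsep]) (auto simp: pt_expand)
    then show "x = x' \<and> k = k'"
      using \<open>k \<in> _\<close> \<open>k' \<in> _\<close> by (auto intro: PiE_ext)
  qed
  then have "card (pt ` D) = card R * K ^ d"
    by (simp add: card_image D_def card_cartesian_product card_PiE)
  moreover have "real (card (pt ` D)) * (unit_ball_vol d * (m / 2) ^ d) \<le> (\<Prod>l<d. w l \<bullet> u l + 2 * (m / 2))"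
    unfolding d_def
  proof (rule card_separated_in_frame_box_le)
    show "finite (pt ` D)" using R by (simp add: D_def finite_PiE)
    have "pt p \<in> L" if p: "p \<in> D" for p
    proof -
      obtain x k where "p = (x, k)" "x \<in> L" using p R by (auto simp: D_def)
      moreover have "(\<Sum>i<d. of_int (int (k i) + int K * Z (start x k) i) *\<^sub>R v i) \<in> L"
        by (intro lattice_sum[OF L] lattice_scaleR_int[OF L]) (use v sub in auto)
      ultimately show ?thesis using lattice_add[OF L] by (simp only: pt_expand)
    qed
    then show "2 * (m / 2) \<le> dist p q" if "p \<in> pt ` D" "q \<in> pt ` D" "p \<noteq> q" for p q
      using that min lattice_diff[OF L] by (auto simp: dist_norm)
    show "0 \<le> p \<bullet> u l \<and> p \<bullet> u l \<le> w l \<bullet> u l" if "p \<in> pt ` D" "l < DIM('a)" for p l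
      using that Z less_imp_le by (fastforce simp: pt_def d_def)
    show "0 \<le> w l \<bullet> u l" if "l < DIM('a)" for l
      using diag[of l] that by (simp add: w_def d_def)
  qed (use orth m in \<open>simp_all add: d_def\<close>)
  moreover have "(\<Prod>l<d. w l \<bullet> u l + 2 * (m / 2)) \<le> ((real K + 1) * m) ^ d"
  proof -
    have "v l \<bullet> u l \<le> m" if "l < d" for l
      using norm_cauchy_schwarz[of "v l" "u l"] v[OF that] orth[OF that that]
      by (simp add: norm_eq_sqrt_inner)
    then have "0 \<le> w l \<bullet> u l + 2 * (m / 2) \<and> w l \<bullet> u l + 2 * (m / 2) \<le> (real K + 1) * m"
      if "l < d" for l
      using mult_left_mono[of "v l \<bullet> u l" m "real K"] diag[OF that] m that
      by (simp add: w_def algebra_simps)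
    then have "(\<Prod>l<d. w l \<bullet> u l + 2 * (m / 2)) \<le> (\<Prod>l<d. (real K + 1) * m)"
      by (intro prod_mono) auto
    then show ?thesis by simp
  qed
  ultimately show ?thesis by (simp add: mult.assoc)
qed

lemma le_of_forall_le_mult_ratio_power:
  fixes x C :: real
  assumes "\<And>K::nat. K \<ge> 1 \<Longrightarrow> x \<le> C * ((real K + 1) / real K) ^ d"
  shows "x \<le> C"
proof -
  have "(\<lambda>K. C * (1 + inverse (real (Suc K))) ^ d) \<longlonglongrightarrow> C * (1 + 0) ^ d"
    by (intro tendsto_intros LIMSEQ_inverse_real_of_nat)
  moreover have "x \<le> C * (1 + inverse (real (Suc K))) ^ d" for K
  proof -
    have "(real (Suc K) + 1) / real (Suc K) = 1 + inverse (real (Suc K))"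
      by (simp add: field_simps)
    then show ?thesis using assms[of "Suc K"] by simp
  qed
  ultimately show ?thesis using LIMSEQ_le_const by force
qed

lemma well_rounded_minimal_basis:
  fixes L :: "'a::euclidean_space set"
  assumes "well_rounded L"
  obtains v where "independent (v ` {..<DIM('a)})" "inj_on v {..<DIM('a)}"
    and "\<And>i. i < DIM('a) \<Longrightarrow> v i \<in> min_vecs L"
proof -
  obtain B where B: "B \<subseteq> min_vecs L" "independent B" "min_vecs L \<subseteq> span B"
    using maximal_independent_subset by blast
  have "span B = UNIV"
    using assms B(3) unfolding well_rounded_def by (metis span_minimal subspace_span top.extremum_uniqueI)
  then have "card B = DIM('a)"
    using dim_span_eq_card_independent[OF B(2)] by simp
  then obtain v where v: "bij_betw v {..<DIM('a)} B"
    using ex_bij_betw_nat_finite[of B] by (metis atLeast0LessThan card.infinite DIM_positive less_irrefl)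
  then show ?thesis
    using that B(1,2) by (auto simp: bij_betw_def)
qed

lemma card_transversal_le:
  fixes L L' R :: "'a::euclidean_space set"
  assumes L: "is_lattice L" and L': "is_lattice L'" and sub: "L' \<subseteq> L"
    and wr: "well_rounded L'" and mv: "min_vecs L' \<subseteq> min_vecs L"
    and R: "finite R" "R \<subseteq> L"
    and Rsep: "\<And>x y. x \<in> R \<Longrightarrow> y \<in> R \<Longrightarrow> x - y \<in> L' \<Longrightarrow> x = y"
  shows "real (card R) \<le> 2 ^ DIM('a) / unit_ball_vol DIM('a)"
proof -
  define d where "d = DIM('a)"
  obtain v where indep: "independent (v ` {..<d})" and inj: "inj_on v {..<d}"
    and "\<And>i. i < d \<Longrightarrow> v i \<in> min_vecs L'"
    using well_rounded_minimal_basis[OF wr] unfolding d_def by metis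
  then have v_min: "v i \<in> min_vecs L" "v i \<in> L'" if "i < d" for i
    using that mv unfolding min_vecs_def[of L'] by blast+
  define m where "m = norm (v 0)"
  have v0: "v 0 \<in> min_vecs L" using v_min by (simp add: d_def)
  then have min: "m \<le> norm w" if "w \<in> L" "w \<noteq> 0" for w
    using that by (auto simp: min_vecs_def m_def)
  have v_bound: "v i \<in> L' \<and> norm (v i) \<le> m" if "i < d" for i
    using v_min[OF that] v0 by (auto simp: min_vecs_def m_def)
  have "m > 0" using v0 by (simp add: min_vecs_def m_def)
  have vol: "unit_ball_vol d \<noteq> 0" using unit_ball_vol_pos[of d] by linarith
  have "real (card R) \<le> (2 ^ d / unit_ball_vol d) * ((real K + 1) / real K) ^ d"
    if "K \<ge> 1" for K
  proof -
    define ball_vol where "ball_vol = unit_ball_vol d * (m / 2) ^ d"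
    have "real (card R) * (real K ^ d * ball_vol) \<le> ((real K + 1) * m) ^ d"
      using card_transversal_packing[OF L L' sub indep[unfolded d_def] inj[unfolded d_def]
          v_bound[unfolded d_def] min R Rsep that]
      by (simp add: d_def ball_vol_def mult.assoc)
    also have "\<dots> = (real K + 1) ^ d * m ^ d" by (rule power_mult_distrib)
    also have "\<dots> = (2 ^ d / unit_ball_vol d) * ((real K + 1) / real K) ^ d * (real K ^ d * ball_vol)"
      using \<open>m > 0\<close> that by (simp add: vol ball_vol_def power_divide field_simps)
    finally have "real (card R) * (real K ^ d * ball_vol)
        \<le> (2 ^ d / unit_ball_vol d) * ((real K + 1) / real K) ^ d * (real K ^ d * ball_vol)" .
    moreover have "real K ^ d * ball_vol > 0" using \<open>m > 0\<close> that by (simp add: ball_vol_def)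
    ultimately show ?thesis by (simp only: mult_le_cancel_right_pos)
  qed
  then show ?thesis unfolding d_def by (rule le_of_forall_le_mult_ratio_power)
qed

lemma two_power_div_unit_ball_vol:
  "2 ^ d / unit_ball_vol (real d) = (4 / pi) powr (real d / 2) * Gamma (real d / 2 + 1)"
proof -
  have "(4::real) powr (real d / 2) = (2 powr 2) powr (real d / 2)" by simp
  also have "\<dots> = 2 ^ d" by (simp add: powr_powr powr_realpow)
  finally have "(4::real) powr (real d / 2) = 2 ^ d" .
  then show ?thesis by (simp add: unit_ball_vol_def powr_divide)
qed

theorem proposition8p2:
  shows "I_bound TYPE('a::euclidean_space) \<le>
    enat (nat \<lfloor>(4 / pi) powr (real DIM('a) / 2) * Gamma (real DIM('a) / 2 + 1)\<rfloor>)"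
  unfolding I_bound_def
proof (rule Sup_least, clarify)
  fix L L' :: "'a set"
  assume L: "is_lattice L" "is_lattice L'" "L' \<subseteq> L" "well_rounded L'" "min_vecs L' \<subseteq> min_vecs L"
  have "real (lattice_index L L') \<le> 2 ^ DIM('a) / unit_ball_vol DIM('a)"
    using card_transversal_le[OF L] by (intro lattice_index_le[OF L(2)]) auto
  then have "lattice_index L L' \<le> nat \<lfloor>(4 / pi) powr (real DIM('a) / 2) * Gamma (real DIM('a) / 2 + 1)\<rfloor>"
    by (simp add: two_power_div_unit_ball_vol le_nat_floor)
  then show "enat (lattice_index L L') \<le> enat (nat \<lfloor>(4 / pi) powr (real DIM('a) / 2) * Gamma (real DIM('a) / 2 + 1)\<rfloor>)"
    by simp
qed

end
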